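(* Let $d,m,n$ be positive integers with $m\ge 2$ and $n\geq d+1$, let $\mu$ be an arbitrary probability distribution on $\mathbb{R}^d$, and let $Z_1,\ldots,Z_n$ be i.i.d. with distribution $\mu$, $\boldsymbol{Z}=(Z_1,\dots,Z_n)$. Then for every $\delta\in(0,1)$, with probability at least $1-\delta$ (over $\boldsymbol{Z}$), simultaneously for all codebooks $C=(x_1,\ldots,x_m)\in(\mathbb{R}^d)^m$ and all positive-definite matrices $S\in\mathbb{S}_+^d$, \[ \left|P_e^{\mu}(C,S)-P_e^{\boldsymbol{Z}}(C,S)\right|\leq 4m\sqrt{\frac{2(d+1)\log\left(\frac{en}{d+1}\right)}{n}}+\sqrt{\frac{2\log(2/\delta)}{n}}. \]
   Context: For a positive-definite $d\times d$ matrix $S$ (the set of these is $\mathbb{S}_+^d$) and $v\in\mathbb{R}^d$, write $\|v\|_S^2=v^TSv$. For a codebook $C=(x_1,\ldots,x_m)$, $S\in\mathbb{S}_+^d$, $j\in[m]=\{1,\dots,m\}$ and $z\in\mathbb{R}^d$ define the loss \[\ell_j(C,S,z)=\mathbb{I}\Big[\min_{j'\in[m],\,j'\neq j}\big(\|x_j-x_{j'}\|_S^2+2(x_j-x_{j'})^TSz\big)<0\Big],\qquad \ell(C,S,z)=\frac1m\sum_{j=1}^m\ell_j(C,S,z),\] which is the error indicator of the minimum Mahalanobis-distance decoder $\hat j(y)\in\arg\min_j\|x_j-y\|_S$ over the additive noise channel $Y=x_j+z$ when codeword $j$ (chosen uniformly) is sent. The expected average error probability is $P_e^{\mu}(C,S)=\mathbb{E}_{Z\sim\mu}[\ell(C,S,Z)]$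 and the empirical average error probability is $P_e^{\boldsymbol{Z}}(C,S)=\frac1n\sum_{i=1}^n\ell(C,S,Z_i)$. *)

theory Defs
  imports "HOL-Probability.Probability"
begin

definition pos_def :: "real^'d^'d \<Rightarrow> bool" where
  "pos_def S \<longleftrightarrow> transpose S = S \<and> (\<forall>v. v \<noteq> 0 \<longrightarrow> v \<bullet> (S *v v) > 0)"

definition sqnormS :: "real^'d^'d \<Rightarrow> real^'d \<Rightarrow> real" where
  "sqnormS S v = v \<bullet> (S *v v)"

text \<open>Codebook C = (x_1,...,x_m) represented as x :: nat => real^d with codewords x 0, ..., x (m-1).\<close>
definition loss_j :: "nat \<Rightarrow> (nat \<Rightarrow> real^'d) \<Rightarrow> real^'d^'d \<Rightarrow> nat \<Rightarrow> real^'d \<Rightarrow> real" where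
  "loss_j m x S j z =
     (if Min ((\<lambda>j'. sqnormS S (x j - x j') + 2 * ((x j - x j') \<bullet> (S *v z)))
              ` {j'. j' < m \<and> j' \<noteq> j}) < 0 then 1 else 0)"

definition loss :: "nat \<Rightarrow> (nat \<Rightarrow> real^'d) \<Rightarrow> real^'d^'d \<Rightarrow> real^'d \<Rightarrow> real" where
  "loss m x S z = (1 / real m) * (\<Sum>j<m. loss_j m x S j z)"

definition Pe_mu :: "(real^'d) measure \<Rightarrow> nat \<Rightarrow> (nat \<Rightarrow> real^'d) \<Rightarrow> real^'d^'d \<Rightarrow> real" where
  "Pe_mu \<mu> m x S = (\<integral>z. loss m x S z \<partial>\<mu>)"

definition Pe_emp :: "nat \<Rightarrow> (nat \<Rightarrow> real^'d) \<Rightarrow> nat \<Rightarrow> (nat \<Rightarrow> real^'d) \<Rightarrow> real^'d^'d \<Rightarrow> real" where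
  "Pe_emp n Z m x S = (1 / real n) * (\<Sum>i<n. loss m x S (Z i))"

end

(*
  The decoder errs on codeword j exactly when one of the affine functionals
  z |-> ||x_j - x_j'||_S^2 + 2 (x_j - x_j')^T S z, j' ~= j, is negative, so the loss is an average of
  indicators of unions of open half-spaces. Half-spaces in R^d shatter no d + 2 points (Radon),
  hence by the Sauer-Shelah lemma the losses of all codebooks and matrices realise at most
  ((e N / (d + 1))^(d + 1))^(m^2) patterns on N noise samples. The Vapnik-Chervonenkis argument
  then applies: a ghost sample and Hoeffding's inequality reduce the deviation to the difference
  between the two halves of a double sample, random swaps of the halves turn this difference into
  a Rademacher sum, and Chernoff's bound together with the pattern count bounds the failure
  probability by 4 * #patterns * exp (- n t^2 / 2), which the choice of t makes at most delta.
*)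

theory Submission
  imports Defs "HOL-Probability.Hoeffding"
begin

section \<open>Shattering and the Sauer--Shelah lemma\<close>

definition shatters :: "'a set set \<Rightarrow> 'a set \<Rightarrow> bool" where
  "shatters F S \<longleftrightarrow> (\<forall>T\<subseteq>S. \<exists>A\<in>F. A \<inter> S = T)"

lemma shatters_image_Diff:
  assumes "shatters ((\<lambda>A. A - {x}) ` F) S" and "x \<notin> S"
  shows "shatters F S"
  unfolding shatters_def
proof (intro allI impI)
  fix T assume "T \<subseteq> S"
  then obtain A where "A \<in> F" "(A - {x}) \<inter> S = T"
    using assms(1) unfolding shatters_def by blast
  with \<open>x \<notin> S\<close> show "\<exists>A\<in>F. A \<inter> S = T" by blast
qed

lemma shatters_insert:
  assumes "shatters {A \<in> F. x \<notin> A \<and> insert x A \<in> F} S"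
  shows "shatters F (insert x S)"
  unfolding shatters_def
proof (intro allI impI)
  fix T assume T: "T \<subseteq> insert x S"
  then have "T - {x} \<subseteq> S" by blast
  then obtain A where A: "A \<in> F" "x \<notin> A" "insert x A \<in> F" "A \<inter> S = T - {x}"
    using assms unfolding shatters_def by blast
  show "\<exists>A\<in>F. A \<inter> insert x S = T"
  proof (cases "x \<in> T")
    case True
    then show ?thesis using A by (intro bexI[of _ "insert x A"]) auto
  next
    case False
    then show ?thesis using A by (intro bexI[of _ A]) auto
  qed
qed

text \<open>Deleting a point \<open>x\<close> from all members of \<open>F\<close> merges exactly the pairs \<open>A, insert x A\<close>.\<close>

lemma card_eq_card_image_Diff_add:
  assumes "finite F"
  shows "card F = card ((\<lambda>A. A - {x}) ` F) + card {A \<in> F. x \<notin> A \<and> insert x A \<in> F}"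
proof -
  define F_out where "F_out = {A \<in> F. x \<notin> A}"
  define G where "G = (\<lambda>A. A - {x}) ` {A \<in> F. x \<in> A}"
  have F_split: "F = F_out \<union> {A \<in> F. x \<in> A}"
    by (auto simp: F_out_def)
  have "(\<lambda>A. A - {x}) ` F = (\<lambda>A. A - {x}) ` F_out \<union> G"
    unfolding G_def by (subst F_split) (rule image_Un)
  moreover have "(\<lambda>A. A - {x}) ` F_out = id ` F_out"
    by (intro image_cong) (auto simp: F_out_def)
  ultimately have image_eq: "(\<lambda>A. A - {x}) ` F = F_out \<union> G" by simp
  have pairs_eq: "{A \<in> F. x \<notin> A \<and> insert x A \<in> F} = F_out \<inter> G"
  proof (intro set_eqI iffI)
    fix A assume A: "A \<in> {A \<in> F. x \<notin> A \<and> insert x A \<in> F}"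
    then have "A \<in> G"
      unfolding G_def by (intro image_eqI[of A _ "insert x A"]) auto
    with A show "A \<in> F_out \<inter> G" by (simp add: F_out_def)
  next
    fix A assume "A \<in> F_out \<inter> G"
    then obtain B where "B \<in> F" "x \<in> B" "A = B - {x}" "A \<in> F"
      by (auto simp: F_out_def G_def)
    then show "A \<in> {A \<in> F. x \<notin> A \<and> insert x A \<in> F}" by (simp add: insert_absorb)
  qed
  have "card G = card {A \<in> F. x \<in> A}"
    unfolding G_def by (intro card_image inj_onI) (metis insert_Diff mem_Collect_eq)
  moreover have "card F = card F_out + card {A \<in> F. x \<in> A}"
    using \<open>finite F\<close> by (subst F_split) (intro card_Un_disjoint, auto simp: F_out_def)
  moreover have "card (F_out \<union> G) + card (F_out \<inter> G) = card F_out + card G"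
    using \<open>finite F\<close> by (intro card_Un_Int[symmetric]) (auto simp: F_out_def G_def)
  ultimately show ?thesis unfolding image_eq pairs_eq by simp
qed

lemma card_shattered_image_Diff_add_le:
  assumes "finite X" "x \<notin> X"
  shows "card {S. S \<subseteq> X \<and> shatters ((\<lambda>A. A - {x}) ` F) S}
      + card {S. S \<subseteq> X \<and> shatters {A \<in> F. x \<notin> A \<and> insert x A \<in> F} S}
    \<le> card {S. S \<subseteq> insert x X \<and> shatters F S}"
proof -
  define S\<^sub>0 where "S\<^sub>0 = {S. S \<subseteq> X \<and> shatters ((\<lambda>A. A - {x}) ` F) S}"
  define S\<^sub>1 where "S\<^sub>1 = {S. S \<subseteq> X \<and> shatters {A \<in> F. x \<notin> A \<and> insert x A \<in> F} S}"
  have "inj_on (insert x) S\<^sub>1"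
  proof (rule inj_onI)
    fix S S' assume "S \<in> S\<^sub>1" "S' \<in> S\<^sub>1" "insert x S = insert x S'"
    moreover from calculation have "x \<notin> S" "x \<notin> S'" using assms(2) by (auto simp: S\<^sub>1_def)
    ultimately show "S = S'" by (metis Diff_insert_absorb)
  qed
  moreover have "S\<^sub>0 \<inter> insert x ` S\<^sub>1 = {}"
    using assms(2) by (auto simp: S\<^sub>0_def)
  ultimately have "card S\<^sub>0 + card S\<^sub>1 = card (S\<^sub>0 \<union> insert x ` S\<^sub>1)"
    using assms(1) by (simp add: card_Un_disjoint card_image S\<^sub>0_def S\<^sub>1_def)
  also have "\<dots> \<le> card {S. S \<subseteq> insert x X \<and> shatters F S}"
  proof (intro card_mono)
    have "S \<subseteq> insert x X \<and> shatters F S" if "S \<in> S\<^sub>0" for S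
      using that assms(2) shatters_image_Diff[of x F S] by (auto simp: S\<^sub>0_def)
    moreover have "insert x S \<subseteq> insert x X \<and> shatters F (insert x S)" if "S \<in> S\<^sub>1" for S
      using that shatters_insert[of F x S] by (auto simp: S\<^sub>1_def)
    ultimately show "S\<^sub>0 \<union> insert x ` S\<^sub>1 \<subseteq> {S. S \<subseteq> insert x X \<and> shatters F S}" by blast
  qed (use assms(1) in simp)
  finally show ?thesis by (simp add: S\<^sub>0_def S\<^sub>1_def)
qed

lemma pajor_card_le_shattered:
  assumes "finite X" "F \<subseteq> Pow X"
  shows "card F \<le> card {S. S \<subseteq> X \<and> shatters F S}"
  using assms
proof (induction X arbitrary: F rule: finite_induct)
  case empty
  show ?case
  proof (cases "F = {}")
    case False
    with empty have "F = {{}}" by auto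
    moreover from this have "{S. S \<subseteq> {} \<and> shatters F S} = {{}}"
      by (auto simp: shatters_def)
    ultimately show ?thesis by simp
  qed simp
next
  case (insert x X)
  have "finite F"
    by (rule finite_subset[OF insert.prems]) (simp add: insert.hyps(1))
  then have "card F = card ((\<lambda>A. A - {x}) ` F) + card {A \<in> F. x \<notin> A \<and> insert x A \<in> F}"
    by (rule card_eq_card_image_Diff_add)
  also have "\<dots> \<le> card {S. S \<subseteq> X \<and> shatters ((\<lambda>A. A - {x}) ` F) S}
      + card {S. S \<subseteq> X \<and> shatters {A \<in> F. x \<notin> A \<and> insert x A \<in> F} S}"
    using insert.prems by (intro add_mono insert.IH) auto
  also have "\<dots> \<le> card {S. S \<subseteq> insert x X \<and> shatters F S}"
    using insert.hyps by (rule card_shattered_image_Diff_add_le)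
  finally show ?case .
qed

lemma card_subsets_card_le:
  assumes "finite A"
  shows "card {S. S \<subseteq> A \<and> card S \<le> K} = (\<Sum>k\<le>K. card A choose k)"
proof -
  have "{S. S \<subseteq> A \<and> card S \<le> K} = (\<Union>k\<in>{..K}. {S. S \<subseteq> A \<and> card S = k})" by auto
  then have "card {S. S \<subseteq> A \<and> card S \<le> K} = (\<Sum>k\<le>K. card {S. S \<subseteq> A \<and> card S = k})"
    using assms by (simp only:) (subst card_UN_disjoint, auto)
  then show ?thesis using assms by (simp add: n_subsets)
qed

text \<open>Multiply by \<open>r\<^sup>K\<close> with \<open>r = K / N\<close>, complete the binomial sum and use \<open>1 + r \<le> exp r\<close>.\<close>

lemma sum_choose_le_exp_power:
  assumes "1 \<le> K" "K \<le> N"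
  shows "real (\<Sum>k\<le>K. N choose k) \<le> (exp 1 * real N / real K) ^ K"
proof -
  define r where "r = real K / real N"
  have r: "0 < r" "r \<le> 1" using assms by (auto simp: r_def)
  have "real (\<Sum>k\<le>K. N choose k) * r ^ K = (\<Sum>k\<le>K. real (N choose k) * r ^ K)"
    by (simp add: sum_distrib_right)
  also have "\<dots> \<le> (\<Sum>k\<le>K. real (N choose k) * r ^ k)"
    using r by (intro sum_mono mult_left_mono power_decreasing) auto
  also have "\<dots> \<le> (\<Sum>k\<le>N. real (N choose k) * r ^ k)"
    using assms r by (intro sum_mono2) auto
  also have "\<dots> = (r + 1) ^ N" by (simp add: binomial_ring)
  also have "\<dots> \<le> exp r ^ N"
    using r exp_ge_add_one_self[of r] by (intro power_mono) (auto simp: add.commute)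
  also have "\<dots> = exp 1 ^ K"
    using assms by (simp add: r_def flip: exp_of_nat_mult)
  finally have "real (\<Sum>k\<le>K. N choose k) \<le> exp 1 ^ K / r ^ K"
    using r by (simp add: field_simps)
  also have "\<dots> = (exp 1 * real N / real K) ^ K"
    using assms by (simp add: r_def field_simps)
  finally show ?thesis .
qed

lemma sauer_shelah:
  assumes "finite X" "F \<subseteq> Pow X"
    and "\<And>S. S \<subseteq> X \<Longrightarrow> shatters F S \<Longrightarrow> card S \<le> K"
    and "1 \<le> K" "K \<le> card X"
  shows "real (card F) \<le> (exp 1 * real (card X) / real K) ^ K"
proof -
  have "card F \<le> card {S. S \<subseteq> X \<and> shatters F S}"
    using assms(1,2) by (rule pajor_card_le_shattered)
  also have "\<dots> \<le> card {S. S \<subseteq> X \<and> card S \<le> K}"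
    using assms(1,3) by (intro card_mono) auto
  also have "\<dots> = (\<Sum>k\<le>K. card X choose k)"
    using assms(1) by (rule card_subsets_card_le)
  finally have "real (card F) \<le> real (\<Sum>k\<le>K. card X choose k)" by linarith
  also have "\<dots> \<le> (exp 1 * real (card X) / real K) ^ K"
    using assms(4,5) by (rule sum_choose_le_exp_power)
  finally show ?thesis .
qed

section \<open>Traces of half-spaces\<close>

definition halfspace_traces :: "(nat \<Rightarrow> 'a::real_inner) \<Rightarrow> nat \<Rightarrow> nat set set" where
  "halfspace_traces y N = {{i. i < N \<and> c + w \<bullet> y i < 0} | c w. True}"

text \<open>Radon's theorem: the positive part of an affine dependence cannot be cut off by a half-space.\<close>

lemma radon_halfspace_split:
  fixes Y :: "'a::real_inner set"
  assumes "finite Y" "sum U Y = 0" "(\<Sum>v\<in>Y. U v *\<^sub>R v) = 0"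
    and split: "\<And>v. v \<in> Y \<Longrightarrow> U v > 0 \<longleftrightarrow> c + w \<bullet> v < 0"
  shows "\<forall>v\<in>Y. U v = 0"
proof -
  have "(\<Sum>v\<in>Y. U v * (c + w \<bullet> v)) = c * sum U Y + w \<bullet> (\<Sum>v\<in>Y. U v *\<^sub>R v)"
    by (simp add: algebra_simps sum.distrib sum_distrib_left inner_sum_right)
  also have "\<dots> = 0" using assms(2,3) by simp
  finally have "(\<Sum>v\<in>Y. - (U v * (c + w \<bullet> v))) = 0" by (simp add: sum_negf)
  moreover have "U v * (c + w \<bullet> v) \<le> 0" if "v \<in> Y" for v
    using split[OF that] by (cases "U v > 0") (auto intro: mult_pos_neg[THEN less_imp_le] mult_nonpos_nonneg)
  ultimately have "U v * (c + w \<bullet> v) = 0" if "v \<in> Y" for v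
    using that sum_nonneg_eq_0_iff[OF assms(1), of "\<lambda>v. - (U v * (c + w \<bullet> v))"] by auto
  then have "U v \<le> 0" if "v \<in> Y" for v
    using that split by (metis less_irrefl mult_pos_neg not_less)
  moreover have "(\<Sum>v\<in>Y. - U v) = 0" using assms(2) by (simp add: sum_negf)
  ultimately show ?thesis
    using sum_nonneg_eq_0_iff[OF assms(1), of "\<lambda>v. - U v"] by force
qed

lemma card_shattered_by_halfspace_traces:
  fixes y :: "nat \<Rightarrow> 'a::euclidean_space"
  assumes shatters: "shatters (halfspace_traces y N) S" and "S \<subseteq> {..<N}"
  shows "card S \<le> DIM('a) + 1"
proof (rule ccontr)
  assume "\<not> ?thesis"
  then have big: "DIM('a) + 2 \<le> card S" by simp
  have cut: "\<exists>c w. \<forall>i\<in>S. i \<in> T \<longleftrightarrow> c + w \<bullet> y i < 0" if "T \<subseteq> S" for T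
  proof -
    from shatters that obtain c w where "{i. i < N \<and> c + w \<bullet> y i < 0} \<inter> S = T"
      unfolding shatters_def halfspace_traces_def by blast
    with \<open>S \<subseteq> {..<N}\<close> show ?thesis by blast
  qed
  show False
  proof (cases "inj_on y S")
    case False
    then obtain i j where "i \<in> S" "j \<in> S" "i \<noteq> j" "y i = y j"
      by (auto simp: inj_on_def)
    moreover obtain c w where "\<forall>k\<in>S. k \<in> {i} \<longleftrightarrow> c + w \<bullet> y k < 0"
      using cut[of "{i}"] \<open>i \<in> S\<close> by auto
    ultimately show False by (metis singletonD singletonI)
  next
    case True
    have "finite S" using \<open>S \<subseteq> {..<N}\<close> finite_subset by blast
    then have "card (y ` S) = card S" "finite (y ` S)" using True by (auto simp: card_image)
    with big have "affine_dependent (y ` S)" using affine_dependent_biggerset by fastforce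
    then obtain U where U: "sum U (y ` S) = 0" "\<exists>v\<in>y ` S. U v \<noteq> 0" "(\<Sum>v\<in>y ` S. U v *\<^sub>R v) = 0"
      using affine_dependent_explicit_finite[OF \<open>finite (y ` S)\<close>] by blast
    obtain c w where "\<forall>i\<in>S. i \<in> {i \<in> S. U (y i) > 0} \<longleftrightarrow> c + w \<bullet> y i < 0"
      using cut[of "{i \<in> S. U (y i) > 0}"] by blast
    then have "\<forall>v\<in>y ` S. U v = 0"
      using radon_halfspace_split[OF \<open>finite (y ` S)\<close> U(1,3)] by auto
    with U(2) show False by blast
  qed
qed

lemma card_halfspace_traces_le:
  fixes y :: "nat \<Rightarrow> 'a::euclidean_space"
  assumes "DIM('a) + 1 \<le> N"
  shows "finite (halfspace_traces y N)"
    and "real (card (halfspace_traces y N)) \<le> (exp 1 * real N / real (DIM('a) + 1)) ^ (DIM('a) + 1)"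
proof -
  have traces: "halfspace_traces y N \<subseteq> Pow {..<N}"
    by (auto simp: halfspace_traces_def)
  then show "finite (halfspace_traces y N)"
    by (rule finite_subset) simp
  show "real (card (halfspace_traces y N)) \<le> (exp 1 * real N / real (DIM('a) + 1)) ^ (DIM('a) + 1)"
    using sauer_shelah[OF _ traces card_shattered_by_halfspace_traces] assms by simp
qed

text \<open>Shifting \<open>c\<close> makes \<open>c + w \<bullet> y\<close> nonzero on \<open>Y\<close> without changing its sign pattern; a strict sign
  pattern on a finite set is open in the parameters, so the dense set \<open>D\<close> realises it.\<close>

lemma halfspace_pattern_dense:
  fixes D :: "(real \<times> 'a::real_inner) set" and Y :: "'a set"
  assumes D: "\<And>X. open X \<Longrightarrow> X \<noteq> {} \<Longrightarrow> \<exists>d\<in>D. d \<in> X"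
    and "finite Y"
  shows "\<exists>q\<in>D. \<forall>y\<in>Y. fst q + snd q \<bullet> y < 0 \<longleftrightarrow> c + w \<bullet> y < 0"
proof -
  define neg where "neg = {y\<in>Y. c + w \<bullet> y < 0}"
  define \<gamma> where "\<gamma> = Min (insert 1 ((\<lambda>y. - (c + w \<bullet> y) / 2) ` neg))"
  have "finite neg" using \<open>finite Y\<close> by (simp add: neg_def)
  then have "0 < \<gamma>" by (auto simp: \<gamma>_def neg_def)
  have \<gamma>_neg: "c + \<gamma> + w \<bullet> y < 0" if "y \<in> neg" for y
  proof -
    have "\<gamma> \<le> - (c + w \<bullet> y) / 2"
      unfolding \<gamma>_def using \<open>finite neg\<close> that by (intro Min_le) auto
    with that show ?thesis by (auto simp: neg_def)
  qed
  define Q where "Q = (\<Inter>y\<in>Y. {q :: real \<times> 'a.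
    if y \<in> neg then fst q + snd q \<bullet> y < 0 else 0 < fst q + snd q \<bullet> y})"
  have "open Q"
    unfolding Q_def
  proof (intro open_INT ballI \<open>finite Y\<close>)
    fix y
    show "open {q :: real \<times> 'a. if y \<in> neg then fst q + snd q \<bullet> y < 0 else 0 < fst q + snd q \<bullet> y}"
    proof (cases "y \<in> neg")
      case True
      then show ?thesis by (simp, intro open_Collect_less continuous_intros)
    next
      case False
      then show ?thesis by (simp, intro open_Collect_less continuous_intros)
    qed
  qed
  moreover have "(c + \<gamma>, w) \<in> Q"
    using \<open>0 < \<gamma>\<close> \<gamma>_neg by (auto simp: Q_def neg_def)
  ultimately obtain q where "q \<in> D" "q \<in> Q" using D by blast
  then show ?thesis by (intro bexI[of _ q]) (auto simp: Q_def neg_def split: if_splits)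
qed

section \<open>Rademacher sums\<close>

lemma exp_minus_add_exp_le:
  fixes x :: real
  shows "exp (- x) + exp x \<le> 2 * exp (x\<^sup>2 / 2)"
proof -
  define y where "y = \<bar>x\<bar>"
  have "y \<ge> 0" by (simp add: y_def)
  have sym: "exp (- x) + exp x = exp (- y) + exp y"
    by (cases "x \<ge> 0") (auto simp: y_def)
  have "- (2 * y) * (1 / 2) + ln (1 + (1 / 2) * (exp (2 * y) - 1)) \<le> (2 * y)\<^sup>2 / 8"
    using Hoeffdings_lemma_aux[of "2 * y" "1 / 2"] \<open>y \<ge> 0\<close> by simp
  then have "ln ((1 + exp (2 * y)) / 2) \<le> y + y\<^sup>2 / 2"
    by (simp add: power2_eq_square field_simps)
  then have "(1 + exp (2 * y)) / 2 \<le> exp (y + y\<^sup>2 / 2)"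
    by (metis add_pos_pos divide_pos_pos exp_gt_zero exp_le_cancel_iff exp_ln zero_less_numeral zero_less_one)
  then have "exp (- y) * ((1 + exp (2 * y)) / 2) \<le> exp (- y) * exp (y + y\<^sup>2 / 2)"
    by (intro mult_left_mono) auto
  then show ?thesis
    using sym by (simp add: y_def field_simps flip: exp_add)
qed

text \<open>Chernoff's bound for Rademacher sums, counting sign vectors.\<close>

lemma card_signs_sum_ge_le:
  fixes a :: "nat \<Rightarrow> real"
  assumes a: "\<And>i. i < n \<Longrightarrow> \<bar>a i\<bar> \<le> 1" and "t \<ge> 0"
  shows "real (card {\<sigma> \<in> Pi\<^sub>E {..<n} (\<lambda>_. UNIV). real n * t \<le> (\<Sum>i<n. if \<sigma> i then - a i else a i)})
         \<le> 2 ^ n * exp (- real n * t\<^sup>2 / 2)"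
proof -
  define s where "s = (\<lambda>\<sigma>. \<Sum>i<n. if \<sigma> i then - a i else a i)"
  define \<Sigma> where "\<Sigma> = Pi\<^sub>E {..<n} (\<lambda>_. UNIV :: bool set)"
  define B where "B = {\<sigma> \<in> \<Sigma>. real n * t \<le> s \<sigma>}"
  have "finite \<Sigma>" unfolding \<Sigma>_def by (intro finite_PiE) auto
  have "real (card B) * exp (real n * t\<^sup>2) = (\<Sum>\<sigma>\<in>B. exp (t * (real n * t)))"
    by (simp add: power2_eq_square mult_ac)
  also have "\<dots> \<le> (\<Sum>\<sigma>\<in>B. exp (t * s \<sigma>))"
    using \<open>t \<ge> 0\<close> by (intro sum_mono) (auto simp: B_def intro: mult_left_mono)
  also have "\<dots> \<le> (\<Sum>\<sigma>\<in>\<Sigma>. exp (t * s \<sigma>))"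
    using \<open>finite \<Sigma>\<close> by (intro sum_mono2) (auto simp: B_def)
  also have "\<dots> = (\<Prod>i<n. \<Sum>b\<in>UNIV. exp (t * (if b then - a i else a i)))"
    unfolding \<Sigma>_def s_def sum_distrib_left exp_sum[OF finite_lessThan]
    by (subst prod_sum_PiE) auto
  also have "\<dots> = (\<Prod>i<n. exp (- (t * a i)) + exp (t * a i))"
    by (simp add: UNIV_bool add.commute)
  also have "\<dots> \<le> (\<Prod>i<n. 2 * exp (t\<^sup>2 / 2))"
  proof (intro prod_mono conjI)
    fix i assume "i \<in> {..<n}"
    then have "(t * a i)\<^sup>2 \<le> t\<^sup>2"
      using a[of i] by (simp add: power_mult_distrib abs_square_le_1 mult_left_le)
    then show "exp (- (t * a i)) + exp (t * a i) \<le> 2 * exp (t\<^sup>2 / 2)"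
      using exp_minus_add_exp_le[of "t * a i"] by (smt (verit) divide_right_mono exp_le_cancel_iff)
  qed (auto intro: add_nonneg_nonneg)
  also have "\<dots> = 2 ^ n * exp (real n * t\<^sup>2 / 2)"
    by (simp add: power_mult_distrib flip: exp_of_nat_mult)
  finally have "real (card B) \<le> 2 ^ n * exp (real n * t\<^sup>2 / 2) / exp (real n * t\<^sup>2)"
    by (simp add: field_simps)
  also have "\<dots> = 2 ^ n * exp (- real n * t\<^sup>2 / 2)"
    by (simp add: field_simps flip: exp_add exp_diff)
  finally show ?thesis by (simp add: B_def \<Sigma>_def s_def)
qed

lemma card_signs_abs_sum_gt_le:
  fixes a :: "nat \<Rightarrow> real"
  assumes a: "\<And>i. i < n \<Longrightarrow> \<bar>a i\<bar> \<le> 1" and "t \<ge> 0"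
  shows "real (card {\<sigma> \<in> Pi\<^sub>E {..<n} (\<lambda>_. UNIV). real n * t < \<bar>\<Sum>i<n. if \<sigma> i then - a i else a i\<bar>})
         \<le> 2 * 2 ^ n * exp (- real n * t\<^sup>2 / 2)"
proof -
  define \<Sigma> where "\<Sigma> = Pi\<^sub>E {..<n} (\<lambda>_. UNIV :: bool set)"
  define s where "s = (\<lambda>a \<sigma>. \<Sum>i<n. if \<sigma> i then - a i else (a i :: real))"
  have "finite \<Sigma>" unfolding \<Sigma>_def by (intro finite_PiE) auto
  have "s (\<lambda>i. - a i) \<sigma> = - s a \<sigma>" for \<sigma>
    by (simp add: s_def sum_negf[symmetric] if_distrib)
  then have "{\<sigma> \<in> \<Sigma>. real n * t < \<bar>s a \<sigma>\<bar>}
      \<subseteq> {\<sigma> \<in> \<Sigma>. real n * t \<le> s a \<sigma>} \<union> {\<sigma> \<in> \<Sigma>. real n * t \<le> s (\<lambda>i. - a i) \<sigma>}"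
    by auto
  then have "card {\<sigma> \<in> \<Sigma>. real n * t < \<bar>s a \<sigma>\<bar>}
      \<le> card ({\<sigma> \<in> \<Sigma>. real n * t \<le> s a \<sigma>} \<union> {\<sigma> \<in> \<Sigma>. real n * t \<le> s (\<lambda>i. - a i) \<sigma>})"
    using \<open>finite \<Sigma>\<close> by (intro card_mono) auto
  also have "\<dots> \<le> card {\<sigma> \<in> \<Sigma>. real n * t \<le> s a \<sigma>} + card {\<sigma> \<in> \<Sigma>. real n * t \<le> s (\<lambda>i. - a i) \<sigma>}"
    by (rule card_Un_le)
  finally have "real (card {\<sigma> \<in> \<Sigma>. real n * t < \<bar>s a \<sigma>\<bar>})
      \<le> real (card {\<sigma> \<in> \<Sigma>. real n * t \<le> s a \<sigma>}) + real (card {\<sigma> \<in> \<Sigma>. real n * t \<le> s (\<lambda>i. - a i) \<sigma>})"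
    by linarith
  also have "\<dots> \<le> 2 ^ n * exp (- real n * t\<^sup>2 / 2) + 2 ^ n * exp (- real n * t\<^sup>2 / 2)"
    unfolding \<Sigma>_def s_def using a \<open>t \<ge> 0\<close>
    by (intro add_mono card_signs_sum_ge_le) auto
  finally show ?thesis by (simp add: \<Sigma>_def s_def)
qed

section \<open>Symmetrisation\<close>

definition sample_patterns :: "('p \<Rightarrow> 'a \<Rightarrow> real) \<Rightarrow> nat \<Rightarrow> (nat \<Rightarrow> 'a) \<Rightarrow> (nat \<Rightarrow> real) set" where
  "sample_patterns f N \<omega> = (\<lambda>p. \<lambda>i\<in>{..<N}. f p (\<omega> i)) ` UNIV"

definition swap_index :: "nat \<Rightarrow> (nat \<Rightarrow> bool) \<Rightarrow> nat \<Rightarrow> nat" where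
  "swap_index n \<sigma> i =
    (if i < n \<and> \<sigma> i then i + n else if n \<le> i \<and> i < 2 * n \<and> \<sigma> (i - n) then i - n else i)"

definition swap_samples :: "nat \<Rightarrow> (nat \<Rightarrow> bool) \<Rightarrow> (nat \<Rightarrow> 'a) \<Rightarrow> nat \<Rightarrow> 'a" where
  "swap_samples n \<sigma> = (\<lambda>\<omega>. \<lambda>i\<in>{..<2 * n}. \<omega> (swap_index n \<sigma> i))"

lemma bij_betw_swap_index: "bij_betw (swap_index n \<sigma>) {..<2 * n} {..<2 * n}"
  by (rule bij_betw_byWitness[of _ "swap_index n \<sigma>"]) (auto simp: swap_index_def)

lemma swap_samples_lower: "i < n \<Longrightarrow> swap_samples n \<sigma> \<omega> i = \<omega> (if \<sigma> i then i + n else i)"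
  by (simp add: swap_samples_def swap_index_def)

lemma swap_samples_upper: "i < n \<Longrightarrow> swap_samples n \<sigma> \<omega> (i + n) = \<omega> (if \<sigma> i then i else i + n)"
  by (simp add: swap_samples_def swap_index_def)

lemma measurable_swap_samples:
  "swap_samples n \<sigma> \<in> measurable (PiM {..<2 * n} (\<lambda>_. M)) (PiM {..<2 * n} (\<lambda>_. M))"
  unfolding swap_samples_def
proof (rule measurable_restrict)
  fix i assume "i \<in> {..<2 * n}"
  then have "swap_index n \<sigma> i \<in> {..<2 * n}"
    using bij_betw_swap_index[of n \<sigma>] by (auto simp: bij_betw_def)
  then show "(\<lambda>\<omega>. \<omega> (swap_index n \<sigma> i)) \<in> measurable (PiM {..<2 * n} (\<lambda>_. M)) M"
    by measurable
qed

lemma distr_swap_samples: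
  assumes "prob_space M"
  shows "distr (PiM {..<2 * n} (\<lambda>_. M)) (PiM {..<2 * n} (\<lambda>_. M)) (swap_samples n \<sigma>) = PiM {..<2 * n} (\<lambda>_. M)"
  unfolding swap_samples_def using assms bij_betw_swap_index[of n \<sigma>]
  by (intro distr_PiM_reindex) (auto simp: bij_betw_def)

lemma card_mult_measure_le_of_measure_preserving:
  assumes "prob_space M" "finite \<Sigma>" "F \<in> sets M"
    and T: "\<And>\<sigma>. \<sigma> \<in> \<Sigma> \<Longrightarrow> T \<sigma> \<in> measurable M M" "\<And>\<sigma>. \<sigma> \<in> \<Sigma> \<Longrightarrow> distr M M (T \<sigma>) = M"
    and count: "\<And>\<omega>. \<omega> \<in> space M \<Longrightarrow> real (card {\<sigma> \<in> \<Sigma>. T \<sigma> \<omega> \<in> F}) \<le> c"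
  shows "real (card \<Sigma>) * measure M F \<le> c"
proof -
  interpret prob_space M by fact
  define F' where "F' = (\<lambda>\<sigma>. T \<sigma> -` F \<inter> space M)"
  have F': "F' \<sigma> \<in> sets M" if "\<sigma> \<in> \<Sigma>" for \<sigma>
    unfolding F'_def using measurable_sets[OF T(1)[OF that] \<open>F \<in> sets M\<close>] .
  have "measure M (F' \<sigma>) = measure M F" if "\<sigma> \<in> \<Sigma>" for \<sigma>
    unfolding F'_def using measure_distr[OF T(1)[OF that] \<open>F \<in> sets M\<close>] T(2)[OF that] by simp
  then have "real (card \<Sigma>) * measure M F = (\<Sum>\<sigma>\<in>\<Sigma>. measure M (F' \<sigma>))"
    by simp
  also have "\<dots> = (\<Sum>\<sigma>\<in>\<Sigma>. \<integral>\<omega>. indicator (F' \<sigma>) \<omega> \<partial>M)"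
    by (simp add: F'_def Int_assoc)
  also have "\<dots> = (\<integral>\<omega>. (\<Sum>\<sigma>\<in>\<Sigma>. indicator (F' \<sigma>) \<omega>) \<partial>M)"
    using F' by (intro Bochner_Integration.integral_sum[symmetric] integrable_real_indicator) (auto simp: less_top[symmetric])
  also have "\<dots> \<le> c"
  proof (rule integral_le_const)
    show "integrable M (\<lambda>\<omega>. \<Sum>\<sigma>\<in>\<Sigma>. indicator (F' \<sigma>) \<omega> :: real)"
      using F' by (intro Bochner_Integration.integrable_sum integrable_real_indicator) (auto simp: less_top[symmetric])
    have "(\<Sum>\<sigma>\<in>\<Sigma>. indicator (F' \<sigma>) \<omega>) = real (card {\<sigma> \<in> \<Sigma>. T \<sigma> \<omega> \<in> F})"
      if "\<omega> \<in> space M" for \<omega>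
      using that \<open>finite \<Sigma>\<close> by (simp add: F'_def indicator_def sum.If_cases Int_def)
    then show "AE \<omega> in M. (\<Sum>\<sigma>\<in>\<Sigma>. indicator (F' \<sigma>) \<omega>) \<le> c"
      using count by auto
  qed
  finally show ?thesis .
qed

lemma diff_swap_samples:
  fixes f :: "'a \<Rightarrow> real"
  assumes "i < n"
  shows "f (swap_samples n \<sigma> \<omega> i) - f (swap_samples n \<sigma> \<omega> (i + n))
    = (if \<sigma> i then - (f (\<omega> i) - f (\<omega> (i + n))) else f (\<omega> i) - f (\<omega> (i + n)))"
  using assms by (simp add: swap_samples_lower swap_samples_upper)

text \<open>On a fixed double sample the class acts only through its finitely many patterns, and for
  each pattern the random swaps produce a Rademacher sum.\<close>

lemma card_swaps_deviation_gt_le: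
  fixes f :: "'p \<Rightarrow> 'a \<Rightarrow> real"
  assumes f01: "\<And>p z. f p z \<in> {0..1}" and fin: "finite (sample_patterns f (2 * n) \<omega>)" and "t \<ge> 0"
  shows "real (card {\<sigma> \<in> Pi\<^sub>E {..<n} (\<lambda>_. UNIV). \<exists>p. real n * t <
             \<bar>\<Sum>i<n. f p (swap_samples n \<sigma> \<omega> i) - f p (swap_samples n \<sigma> \<omega> (i + n))\<bar>})
         \<le> real (card (sample_patterns f (2 * n) \<omega>)) * (2 * 2 ^ n * exp (- real n * t\<^sup>2 / 2))"
proof -
  define V where "V = sample_patterns f (2 * n) \<omega>"
  define \<Sigma> where "\<Sigma> = Pi\<^sub>E {..<n} (\<lambda>_. UNIV :: bool set)"
  define a where "a = (\<lambda>v :: nat \<Rightarrow> real. \<lambda>i. v i - v (i + n))"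
  define bad where "bad = (\<lambda>v. {\<sigma> \<in> \<Sigma>. real n * t < \<bar>\<Sum>i<n. if \<sigma> i then - a v i else a v i\<bar>})"
  define E where "E = exp (- real n * t\<^sup>2 / 2)"
  have "finite \<Sigma>" unfolding \<Sigma>_def by (intro finite_PiE) auto
  have "{\<sigma> \<in> \<Sigma>. \<exists>p. real n * t < \<bar>\<Sum>i<n. f p (swap_samples n \<sigma> \<omega> i) - f p (swap_samples n \<sigma> \<omega> (i + n))\<bar>}
      \<subseteq> (\<Union>v\<in>V. bad v)"
  proof safe
    fix \<sigma> p
    assume "\<sigma> \<in> \<Sigma>" and gt: "real n * t < \<bar>\<Sum>i<n. f p (swap_samples n \<sigma> \<omega> i) - f p (swap_samples n \<sigma> \<omega> (i + n))\<bar>"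
    define v where "v = (\<lambda>i\<in>{..<2 * n}. f p (\<omega> i))"
    have "(\<Sum>i<n. f p (swap_samples n \<sigma> \<omega> i) - f p (swap_samples n \<sigma> \<omega> (i + n)))
        = (\<Sum>i<n. if \<sigma> i then - a v i else a v i)"
      by (intro sum.cong refl) (simp add: diff_swap_samples[of _ n "f p"] a_def v_def)
    with gt \<open>\<sigma> \<in> \<Sigma>\<close> have "\<sigma> \<in> bad v" by (simp add: bad_def)
    moreover have "v \<in> V" unfolding V_def v_def sample_patterns_def by blast
    ultimately show "\<sigma> \<in> (\<Union>v\<in>V. bad v)" by blast
  qed
  then have "card {\<sigma> \<in> \<Sigma>. \<exists>p. real n * t < \<bar>\<Sum>i<n. f p (swap_samples n \<sigma> \<omega> i) - f p (swap_samples n \<sigma> \<omega> (i + n))\<bar>}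
      \<le> card (\<Union>v\<in>V. bad v)"
    using fin \<open>finite \<Sigma>\<close> by (intro card_mono) (auto simp: V_def bad_def)
  also have "\<dots> \<le> (\<Sum>v\<in>V. card (bad v))"
    using fin by (intro card_UN_le) (simp add: V_def)
  finally have "real (card {\<sigma> \<in> \<Sigma>. \<exists>p. real n * t < \<bar>\<Sum>i<n. f p (swap_samples n \<sigma> \<omega> i) - f p (swap_samples n \<sigma> \<omega> (i + n))\<bar>})
      \<le> (\<Sum>v\<in>V. real (card (bad v)))"
    by (simp flip: of_nat_sum)
  also have "\<dots> \<le> (\<Sum>v\<in>V. 2 * 2 ^ n * E)"
  proof (rule sum_mono)
    fix v assume "v \<in> V"
    then obtain p where v: "v = (\<lambda>i\<in>{..<2 * n}. f p (\<omega> i))"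
      by (auto simp: V_def sample_patterns_def)
    have "\<bar>a v i\<bar> \<le> 1" if "i < n" for i
      using that f01[of p "\<omega> i"] f01[of p "\<omega> (i + n)"] by (simp add: a_def v abs_le_iff)
    then show "real (card (bad v)) \<le> 2 * 2 ^ n * E"
      unfolding bad_def \<Sigma>_def E_def using \<open>t \<ge> 0\<close> by (rule card_signs_abs_sum_gt_le)
  qed
  finally show ?thesis by (simp add: V_def \<Sigma>_def E_def)
qed

text \<open>Symmetrisation: swapping halves does not change the distribution of a double sample, so
  averaging over all \<open>2\<^sup>n\<close> swaps reduces the bound to the counting estimate above.\<close>

lemma measure_symmetrized_deviation_le:
  fixes f :: "'p \<Rightarrow> 'a \<Rightarrow> real"
  assumes "prob_space M" and f01: "\<And>p z. f p z \<in> {0..1}" and "t \<ge> 0"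
    and growth: "\<And>\<omega>. finite (sample_patterns f (2 * n) \<omega>) \<and> real (card (sample_patterns f (2 * n) \<omega>)) \<le> B"
    and F: "F \<in> sets (PiM {..<2 * n} (\<lambda>_. M))"
      "F \<subseteq> {\<omega>. \<exists>p. real n * t < \<bar>\<Sum>i<n. f p (\<omega> i) - f p (\<omega> (i + n))\<bar>}"
  shows "measure (PiM {..<2 * n} (\<lambda>_. M)) F \<le> 2 * B * exp (- real n * t\<^sup>2 / 2)"
proof -
  define \<Sigma> where "\<Sigma> = Pi\<^sub>E {..<n} (\<lambda>_. UNIV :: bool set)"
  define E where "E = exp (- real n * t\<^sup>2 / 2)"
  have "real (card \<Sigma>) * measure (PiM {..<2 * n} (\<lambda>_. M)) F \<le> B * (2 * 2 ^ n * E)"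
  proof (rule card_mult_measure_le_of_measure_preserving[where T = "swap_samples n"])
    fix \<omega>
    have "card {\<sigma> \<in> \<Sigma>. swap_samples n \<sigma> \<omega> \<in> F} \<le> card {\<sigma> \<in> \<Sigma>. \<exists>p. real n * t <
        \<bar>\<Sum>i<n. f p (swap_samples n \<sigma> \<omega> i) - f p (swap_samples n \<sigma> \<omega> (i + n))\<bar>}"
      using F(2) finite_PiE[of "{..<n}" "\<lambda>_. UNIV :: bool set"] by (intro card_mono) (auto simp: \<Sigma>_def)
    also have "real \<dots> \<le> real (card (sample_patterns f (2 * n) \<omega>)) * (2 * 2 ^ n * E)"
      unfolding \<Sigma>_def E_def using f01 growth[of \<omega>] \<open>t \<ge> 0\<close> by (intro card_swaps_deviation_gt_le) auto
    also have "\<dots> \<le> B * (2 * 2 ^ n * E)"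
      using growth by (intro mult_right_mono) (auto simp: E_def)
    finally show "real (card {\<sigma> \<in> \<Sigma>. swap_samples n \<sigma> \<omega> \<in> F}) \<le> B * (2 * 2 ^ n * E)"
      by linarith
  qed (use \<open>prob_space M\<close> F(1) in \<open>auto simp: \<Sigma>_def finite_PiE measurable_swap_samples distr_swap_samples prob_space_PiM\<close>)
  moreover have "card \<Sigma> = 2 ^ n" by (simp add: \<Sigma>_def card_PiE)
  ultimately show ?thesis by (simp add: E_def mult_ac)
qed

section \<open>Uniform deviation bound\<close>

lemma indep_vars_PiM_coordinates:
  assumes M: "\<And>i. i \<in> I \<Longrightarrow> prob_space (M i)" and "I \<noteq> {}"
  shows "prob_space.indep_vars (PiM I M) M (\<lambda>i \<omega>. \<omega> i) I"
proof -
  interpret prob_space "PiM I M" using M by (rule prob_space_PiM)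
  have "distr (PiM I M) (PiM I M) (\<lambda>\<omega>. \<lambda>i\<in>I. \<omega> i) = distr (PiM I M) (PiM I M) (\<lambda>\<omega>. \<omega>)"
    by (intro distr_cong) (auto simp: space_PiM PiE_iff extensional_restrict)
  also have "\<dots> = PiM I (\<lambda>i. distr (PiM I M) (M i) (\<lambda>\<omega>. \<omega> i))"
    using M by (simp add: distr_PiM_component cong: PiM_cong)
  finally show ?thesis
    using \<open>I \<noteq> {}\<close> by (subst indep_vars_iff_distr_eq_PiM') auto
qed

lemma prob_PiM_sum_deviation_ge_le:
  fixes f :: "'a \<Rightarrow> real" and I :: "'b set"
  assumes "prob_space \<mu>" and f: "f \<in> borel_measurable \<mu>" "\<And>z. f z \<in> {0..1}"
    and "finite I" "I \<noteq> {}" "\<epsilon> \<ge> 0"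
  shows "measure (PiM I (\<lambda>_. \<mu>))
      {Z \<in> space (PiM I (\<lambda>_. \<mu>)). \<epsilon> \<le> \<bar>(\<Sum>i\<in>I. f (Z i)) - real (card I) * (\<integral>z. f z \<partial>\<mu>)\<bar>}
    \<le> 2 * exp (- 2 * \<epsilon>\<^sup>2 / real (card I))"
proof -
  define P where "P = PiM I (\<lambda>_. \<mu>)"
  define X where "X = (\<lambda>i (Z :: 'b \<Rightarrow> 'a). f (Z i))"
  interpret P: prob_space P unfolding P_def by (intro prob_space_PiM \<open>prob_space \<mu>\<close>)
  have expectation: "P.expectation (X i) = (\<integral>z. f z \<partial>\<mu>)" if "i \<in> I" for i
  proof -
    have "(\<integral>z. f z \<partial>\<mu>) = (\<integral>z. f z \<partial>distr P \<mu> (\<lambda>Z. Z i))"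
      unfolding P_def using that \<open>prob_space \<mu>\<close> by (subst distr_PiM_component) auto
    also have "\<dots> = P.expectation (X i)"
      unfolding X_def P_def using that f(1) by (subst integral_distr) auto
    finally show ?thesis by simp
  qed
  interpret Hoeffding_ineq P I X "\<lambda>_. 0" "\<lambda>_. 1" "\<Sum>i\<in>I. P.expectation (X i)"
  proof unfold_locales
    show "P.indep_vars (\<lambda>_. borel) X I"
      unfolding X_def P_def using \<open>prob_space \<mu>\<close> \<open>I \<noteq> {}\<close> f(1)
      by (intro prob_space.indep_vars_compose2[OF prob_space_PiM indep_vars_PiM_coordinates]) auto
  qed (use \<open>finite I\<close> f(2) in \<open>auto simp: X_def\<close>)
  have sum_expectation: "(\<Sum>i\<in>I. P.expectation (X i)) = real (card I) * (\<integral>z. f z \<partial>\<mu>)"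
    by (simp add: expectation)
  have "P.prob {Z \<in> space P. \<epsilon> \<le> \<bar>(\<Sum>i\<in>I. X i Z) - (\<Sum>i\<in>I. P.expectation (X i))\<bar>}
      \<le> 2 * exp (- 2 * \<epsilon>\<^sup>2 / (\<Sum>i\<in>I. (1 - 0)\<^sup>2))"
    using \<open>finite I\<close> \<open>I \<noteq> {}\<close> \<open>\<epsilon> \<ge> 0\<close> by (intro Hoeffding_ineq_abs_ge) (auto simp: card_gt_0_iff)
  then show ?thesis unfolding sum_expectation by (simp add: P_def X_def)
qed

lemma measure_large_sections_le:
  assumes "prob_space M" "prob_space N" "G \<in> sets (M \<Otimes>\<^sub>M N)" "0 \<le> c"
  shows "c * measure M {x \<in> space M. c \<le> measure N (Pair x -` G)} \<le> measure (M \<Otimes>\<^sub>M N) G"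
proof -
  interpret M: prob_space M by fact
  interpret N: prob_space N by fact
  interpret pair_prob_space M N by unfold_locales
  define S where "S = {x \<in> space M. c \<le> measure N (Pair x -` G)}"
  have [measurable]: "(\<lambda>x. emeasure N (Pair x -` G)) \<in> borel_measurable M"
    using assms(3) by (rule N.measurable_emeasure_Pair)
  have S: "S = {x \<in> space M. ennreal c \<le> emeasure N (Pair x -` G)}"
    unfolding S_def using \<open>0 \<le> c\<close> by (simp add: N.emeasure_eq_measure)
  have "ennreal (c * measure M S) = (\<integral>\<^sup>+x. ennreal c * indicator S x \<partial>M)"
    unfolding S using \<open>0 \<le> c\<close> by (simp add: nn_integral_cmult_indicator M.emeasure_eq_measure ennreal_mult)
  also have "\<dots> \<le> (\<integral>\<^sup>+x. emeasure N (Pair x -` G) \<partial>M)"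
    by (intro nn_integral_mono) (auto simp: S indicator_def)
  also have "\<dots> = ennreal (measure (M \<Otimes>\<^sub>M N) G)"
    using assms(3) by (simp add: N.emeasure_pair_measure_alt[symmetric] emeasure_eq_measure)
  finally show ?thesis by (simp add: S_def)
qed

lemma prob_PiM_sum_near_mean_ge_half:
  fixes f :: "'a \<Rightarrow> real" and I :: "'b set"
  assumes "prob_space \<mu>" and f: "f \<in> borel_measurable \<mu>" "\<And>z. f z \<in> {0..1}"
    and "finite I" "I \<noteq> {}"
  shows "1 / 2 \<le> measure (PiM I (\<lambda>_. \<mu>)) {Z \<in> space (PiM I (\<lambda>_. \<mu>)).
           \<bar>(\<Sum>i\<in>I. f (Z i)) - real (card I) * (\<integral>z. f z \<partial>\<mu>)\<bar> < sqrt (real (card I))}"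
proof -
  define P where "P = PiM I (\<lambda>_. \<mu>)"
  define C where "C = {Z \<in> space P. \<bar>(\<Sum>i\<in>I. f (Z i)) - real (card I) * (\<integral>z. f z \<partial>\<mu>)\<bar> < sqrt (real (card I))}"
  interpret P: prob_space P unfolding P_def by (intro prob_space_PiM \<open>prob_space \<mu>\<close>)
  have "0 < card I" using \<open>finite I\<close> \<open>I \<noteq> {}\<close> by (simp add: card_gt_0_iff)
  have "space P - C = {Z \<in> space P. sqrt (real (card I)) \<le> \<bar>(\<Sum>i\<in>I. f (Z i)) - real (card I) * (\<integral>z. f z \<partial>\<mu>)\<bar>}"
    by (auto simp: C_def not_less)
  then have "measure P (space P - C) \<le> 2 * exp (- 2 * (sqrt (real (card I)))\<^sup>2 / real (card I))"
    unfolding P_def using assms by (simp only:) (intro prob_PiM_sum_deviation_ge_le; simp)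
  also have "\<dots> = 2 * exp (- 2)" using \<open>0 < card I\<close> by simp
  also have "\<dots> \<le> 1 / 2"
  proof -
    have "2 * 2 \<le> exp (1 :: real) * exp 1"
      using exp_ge_add_one_self[of 1] by (intro mult_mono) auto
    then show ?thesis by (simp add: exp_minus field_simps flip: exp_add)
  qed
  finally have "measure P (space P - C) \<le> 1 / 2" .
  moreover have "C \<in> P.events"
    unfolding C_def P_def using f(1) by measurable
  ultimately show ?thesis
    using P.prob_compl[of C] unfolding C_def P_def by linarith
qed

lemma sum_upper_half_eq:
  fixes g :: "nat \<Rightarrow> 'a::comm_monoid_add"
  shows "(\<Sum>i\<in>{n..<2 * n}. g i) = (\<Sum>i<n. g (i + n))"
  using sum.shift_bounds_nat_ivl[of g 0 n n] by (simp add: atLeast0LessThan mult_2)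

lemma borel_measurable_PiM_coordinate:
  "i \<in> I \<Longrightarrow> f \<in> borel_measurable M \<Longrightarrow> (\<lambda>\<omega>. f (\<omega> i)) \<in> borel_measurable (PiM I (\<lambda>_. M))"
  by (rule measurable_compose[OF measurable_component_singleton])

text \<open>The ghost sample \<open>Z'\<close> is indexed by \<open>{n..<2 * n}\<close>.\<close>

definition ghost_deviations :: "('p \<Rightarrow> 'a \<Rightarrow> real) \<Rightarrow> 'p set \<Rightarrow> nat \<Rightarrow> real \<Rightarrow> ((nat \<Rightarrow> 'a) \<times> (nat \<Rightarrow> 'a)) set"
  where "ghost_deviations f D n t = {(Z, Z'). \<exists>q\<in>D. real n * t < \<bar>\<Sum>i<n. f q (Z i) - f q (Z' (i + n))\<bar>}"

lemma measure_ghost_deviations_le: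
  fixes f :: "'p \<Rightarrow> 'a \<Rightarrow> real"
  assumes \<mu>: "prob_space \<mu>" and f_meas: "\<And>p. f p \<in> borel_measurable \<mu>" and f01: "\<And>p z. f p z \<in> {0..1}"
    and "countable D"
    and growth: "\<And>\<omega>. finite (sample_patterns f (2 * n) \<omega>) \<and> real (card (sample_patterns f (2 * n) \<omega>)) \<le> B"
    and "t \<ge> 0"
  defines "P \<equiv> PiM {..<n} (\<lambda>_. \<mu>)" and "Q \<equiv> PiM {n..<2 * n} (\<lambda>_. \<mu>)"
  shows "ghost_deviations f D n t \<inter> space (P \<Otimes>\<^sub>M Q) \<in> sets (P \<Otimes>\<^sub>M Q)"
    and "measure (P \<Otimes>\<^sub>M Q) (ghost_deviations f D n t \<inter> space (P \<Otimes>\<^sub>M Q)) \<le> 2 * B * exp (- real n * t\<^sup>2 / 2)"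
proof -
  define P2 where "P2 = PiM {..<2 * n} (\<lambda>_. \<mu>)"
  define F where "F = {\<omega> \<in> space P2. \<exists>q\<in>D. real n * t < \<bar>\<Sum>i<n. f q (\<omega> i) - f q (\<omega> (i + n))\<bar>}"
  interpret product_sigma_finite "\<lambda>_ :: nat. \<mu>"
    using \<mu> by (simp add: product_sigma_finite_def prob_space_imp_sigma_finite)
  have halves: "{..<n} \<union> {n..<2 * n} = {..<2 * n}" "{..<n} \<inter> {n..<2 * n} = {}" by auto
  have F_sets: "F \<in> sets P2"
    unfolding F_def P2_def
  proof (rule sets.sets_Collect_countable_Ex'[OF _ \<open>countable D\<close>])
    fix q
    have "(\<lambda>\<omega>. \<bar>\<Sum>i<n. f q (\<omega> i) - f q (\<omega> (i + n))\<bar>) \<in> borel_measurable (PiM {..<2 * n} (\<lambda>_. \<mu>))"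
      using f_meas by (intro borel_measurable_abs borel_measurable_sum borel_measurable_diff
          borel_measurable_PiM_coordinate) auto
    then show "{\<omega> \<in> space (PiM {..<2 * n} (\<lambda>_. \<mu>)). real n * t < \<bar>\<Sum>i<n. f q (\<omega> i) - f q (\<omega> (i + n))\<bar>}
        \<in> sets (PiM {..<2 * n} (\<lambda>_. \<mu>))"
      by measurable
  qed
  have merge: "merge {..<n} {n..<2 * n} \<in> measurable (P \<Otimes>\<^sub>M Q) P2"
    using measurable_merge[of "{..<n}" "{n..<2 * n}" "\<lambda>_. \<mu>"] by (simp add: P_def Q_def P2_def halves)
  have G: "ghost_deviations f D n t \<inter> space (P \<Otimes>\<^sub>M Q) = merge {..<n} {n..<2 * n} -` F \<inter> space (P \<Otimes>\<^sub>M Q)"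
  proof (intro set_eqI iffI)
    fix w assume w: "w \<in> ghost_deviations f D n t \<inter> space (P \<Otimes>\<^sub>M Q)"
    then have "merge {..<n} {n..<2 * n} w \<in> space P2" using measurable_space[OF merge] by blast
    with w show "w \<in> merge {..<n} {n..<2 * n} -` F \<inter> space (P \<Otimes>\<^sub>M Q)"
      by (cases w) (auto simp: ghost_deviations_def F_def halves)
  next
    fix w assume "w \<in> merge {..<n} {n..<2 * n} -` F \<inter> space (P \<Otimes>\<^sub>M Q)"
    then show "w \<in> ghost_deviations f D n t \<inter> space (P \<Otimes>\<^sub>M Q)"
      by (cases w) (auto simp: ghost_deviations_def F_def halves)
  qed
  show "ghost_deviations f D n t \<inter> space (P \<Otimes>\<^sub>M Q) \<in> sets (P \<Otimes>\<^sub>M Q)"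
    unfolding G using merge F_sets by (rule measurable_sets)
  have "measure (P \<Otimes>\<^sub>M Q) (ghost_deviations f D n t \<inter> space (P \<Otimes>\<^sub>M Q)) = measure P2 F"
    unfolding G using distr_merge[of "{..<n}" "{n..<2 * n}"] measure_distr[OF merge F_sets]
    by (simp add: P_def Q_def P2_def halves)
  also have "\<dots> \<le> 2 * B * exp (- real n * t\<^sup>2 / 2)"
    unfolding P2_def using \<mu> f01 \<open>t \<ge> 0\<close> growth F_sets
    by (intro measure_symmetrized_deviation_le[where f = f]) (auto simp: F_def P2_def)
  finally show "measure (P \<Otimes>\<^sub>M Q) (ghost_deviations f D n t \<inter> space (P \<Otimes>\<^sub>M Q)) \<le> 2 * B * exp (- real n * t\<^sup>2 / 2)" .
qed

lemma ghost_deviationsI: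
  assumes D: "\<And>Y p. finite Y \<Longrightarrow> \<exists>q\<in>D. \<forall>y\<in>Y. f q y = f p y"
    and Z: "real n * t + sqrt (real n) < \<bar>(\<Sum>i<n. f p (Z i)) - real n * c\<bar>"
    and Z': "\<bar>(\<Sum>i\<in>{n..<2 * n}. f p (Z' i)) - real n * c\<bar> < sqrt (real n)"
  shows "(Z, Z') \<in> ghost_deviations f D n t"
proof -
  obtain q where "q \<in> D" and q: "\<forall>y\<in>Z ` {..<n} \<union> Z' ` {n..<2 * n}. f q y = f p y"
    using D[of "Z ` {..<n} \<union> Z' ` {n..<2 * n}" p] by blast
  have "(\<Sum>i<n. f q (Z i) - f q (Z' (i + n))) = (\<Sum>i<n. f p (Z i) - f p (Z' (i + n)))"
    using q by (intro sum.cong refl) auto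
  also have "\<dots> = (\<Sum>i<n. f p (Z i)) - (\<Sum>i\<in>{n..<2 * n}. f p (Z' i))"
    by (simp only: sum_subtractf sum_upper_half_eq)
  finally have "real n * t < \<bar>\<Sum>i<n. f q (Z i) - f q (Z' (i + n))\<bar>"
    using Z Z' by linarith
  with \<open>q \<in> D\<close> show ?thesis by (auto simp: ghost_deviations_def)
qed

text \<open>The countable set \<open>D\<close>, which represents the whole class
  on every finite sample, only serves to make the bad event measurable. If a sample deviates by more
  than \<open>n t + \<surd>n\<close>, then by Hoeffding at least half of the ghost samples lie in \<open>ghost_deviations\<close>.\<close>

theorem uniform_deviation_le:
  fixes f :: "'p \<Rightarrow> 'a \<Rightarrow> real" and \<mu> :: "'a measure"
  assumes \<mu>: "prob_space \<mu>" and f_meas: "\<And>p. f p \<in> borel_measurable \<mu>" and f01: "\<And>p z. f p z \<in> {0..1}"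
    and D: "countable D" "\<And>Y p. finite Y \<Longrightarrow> \<exists>q\<in>D. \<forall>y\<in>Y. f q y = f p y"
    and growth: "\<And>\<omega>. finite (sample_patterns f (2 * n) \<omega>) \<and> real (card (sample_patterns f (2 * n) \<omega>)) \<le> B"
    and "t \<ge> 0" "n \<ge> 1"
  shows "\<exists>A\<in>sets (PiM {..<n} (\<lambda>_. \<mu>)).
    1 - 4 * B * exp (- real n * t\<^sup>2 / 2) \<le> measure (PiM {..<n} (\<lambda>_. \<mu>)) A \<and>
    (\<forall>Z\<in>A. \<forall>p. \<bar>(\<Sum>i<n. f p (Z i)) - real n * (\<integral>z. f p z \<partial>\<mu>)\<bar> \<le> real n * t + sqrt (real n))"
proof -
  define P where "P = PiM {..<n} (\<lambda>_. \<mu>)"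
  define Q where "Q = PiM {n..<2 * n} (\<lambda>_. \<mu>)"
  define G where "G = ghost_deviations f D n t \<inter> space (P \<Otimes>\<^sub>M Q)"
  define E where "E = exp (- real n * t\<^sup>2 / 2)"
  interpret P: prob_space P unfolding P_def by (intro prob_space_PiM \<mu>)
  interpret Q: prob_space Q unfolding Q_def by (intro prob_space_PiM \<mu>)
  have G_sets: "G \<in> sets (P \<Otimes>\<^sub>M Q)" and G_le: "measure (P \<Otimes>\<^sub>M Q) G \<le> 2 * B * E"
    unfolding G_def P_def Q_def E_def using \<mu> f_meas f01 D(1) growth \<open>t \<ge> 0\<close>
    by (rule measure_ghost_deviations_le)+
  define A where "A = {Z \<in> space P. measure Q (Pair Z -` G) < 1 / 2}"
  have [measurable]: "(\<lambda>Z. measure Q (Pair Z -` G)) \<in> borel_measurable P"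
    unfolding measure_def by (intro borel_measurable_enn2real Q.measurable_emeasure_Pair G_sets)
  have A_sets: "A \<in> sets P"
    unfolding A_def by measurable
  have "space P - A = {Z \<in> space P. 1 / 2 \<le> measure Q (Pair Z -` G)}"
    by (auto simp: A_def not_less)
  then have "1 / 2 * measure P (space P - A) \<le> 2 * B * E"
    using measure_large_sections_le[OF P.prob_space_axioms Q.prob_space_axioms G_sets, of "1 / 2"] G_le
    by simp
  then have "1 - 4 * B * E \<le> measure P A"
    using P.prob_compl[OF A_sets] by simp
  moreover have "\<bar>(\<Sum>i<n. f p (Z i)) - real n * (\<integral>z. f p z \<partial>\<mu>)\<bar> \<le> real n * t + sqrt (real n)"
    if "Z \<in> A" for Z p
  proof (rule ccontr)
    assume dev: "\<not> ?thesis"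
    define C where "C = {Z' \<in> space Q.
      \<bar>(\<Sum>i\<in>{n..<2 * n}. f p (Z' i)) - real n * (\<integral>z. f p z \<partial>\<mu>)\<bar> < sqrt (real n)}"
    have "1 / 2 \<le> measure Q C"
      using prob_PiM_sum_near_mean_ge_half[OF \<mu> f_meas f01, of "{n..<2 * n}"] \<open>n \<ge> 1\<close>
      by (simp add: C_def Q_def)
    also have "\<dots> \<le> measure Q (Pair Z -` G)"
    proof (rule Q.finite_measure_mono)
      show "C \<subseteq> Pair Z -` G"
        using ghost_deviationsI[OF D(2)] dev \<open>Z \<in> A\<close>
        by (auto simp: C_def G_def A_def space_pair_measure not_le)
      show "Pair Z -` G \<in> Q.events"
        using G_sets by (rule sets_Pair1)
    qed
    finally show False using \<open>Z \<in> A\<close> by (simp add: A_def)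
  qed
  ultimately show ?thesis
    using A_sets by (auto simp: P_def E_def)
qed

section \<open>The minimum Mahalanobis-distance decoder\<close>

definition linear_test_loss :: "nat \<Rightarrow> (nat \<times> nat \<Rightarrow> real \<times> 'a) \<Rightarrow> 'a::real_inner \<Rightarrow> real" where
  "linear_test_loss m p z =
    1 / real m * (\<Sum>j<m. if \<exists>j'<m. j' \<noteq> j \<and> fst (p (j, j')) + snd (p (j, j')) \<bullet> z < 0 then 1 else 0)"

text \<open>The decision statistic \<open>sqnormS S (x j - x j') + 2 * ((x j - x j') \<bullet> (S *v z))\<close> of codeword
  \<open>j\<close> against \<open>j'\<close> is affine in the noise \<open>z\<close>.\<close>

definition decoder_tests :: "(nat \<Rightarrow> real^'d) \<Rightarrow> real^'d^'d \<Rightarrow> nat \<times> nat \<Rightarrow> real \<times> (real^'d)" where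
  "decoder_tests x S = (\<lambda>(j, j'). (sqnormS S (x j - x j'), 2 *\<^sub>R ((x j - x j') v* S)))"

lemma loss_eq_linear_test_loss:
  assumes "m \<ge> 2"
  shows "loss m x S z = linear_test_loss m (decoder_tests x S) z"
proof -
  have "loss_j m x S j z = (if \<exists>j'<m. j' \<noteq> j \<and>
      fst (decoder_tests x S (j, j')) + snd (decoder_tests x S (j, j')) \<bullet> z < 0 then 1 else 0)"
    if "j < m" for j
  proof -
    define J where "J = {j'. j' < m \<and> j' \<noteq> j}"
    have "finite J" by (simp add: J_def)
    \<comment> \<open>\<open>Min {}\<close> is unspecified; \<open>m \<ge> 2\<close> rules it out.\<close>
    moreover have "(if j = 0 then 1 else 0) \<in> J"
      using \<open>m \<ge> 2\<close> that by (auto simp: J_def)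
    then have "J \<noteq> {}" by blast
    ultimately have "Min ((\<lambda>j'. sqnormS S (x j - x j') + 2 * ((x j - x j') \<bullet> (S *v z))) ` J) < 0
        \<longleftrightarrow> (\<exists>j'\<in>J. sqnormS S (x j - x j') + 2 * ((x j - x j') \<bullet> (S *v z)) < 0)"
      by (subst Min_less_iff) auto
    then show ?thesis
      unfolding loss_j_def J_def[symmetric] by (auto simp: J_def decoder_tests_def dot_lmul_matrix)
  qed
  then show ?thesis
    unfolding loss_def linear_test_loss_def by (intro arg_cong[where f = "\<lambda>s. 1 / real m * s"] sum.cong) auto
qed

lemma linear_test_loss_bounds: "linear_test_loss m p z \<in> {0..1}"
proof -
  have "(\<Sum>j<m. if \<exists>j'<m. j' \<noteq> j \<and> fst (p (j, j')) + snd (p (j, j')) \<bullet> z < 0 then 1 else 0) \<le> (\<Sum>j<m. 1 :: real)"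
    by (intro sum_mono) auto
  then show ?thesis
    by (cases "m = 0") (auto simp: linear_test_loss_def field_simps intro!: sum_nonneg)
qed

lemma borel_measurable_linear_test_loss:
  "linear_test_loss m p \<in> borel_measurable (borel :: 'a::euclidean_space measure)"
  unfolding linear_test_loss_def by measurable

lemma linear_test_loss_dense:
  fixes D :: "(real \<times> 'a::real_inner) set"
  assumes D: "\<And>X. open X \<Longrightarrow> X \<noteq> {} \<Longrightarrow> \<exists>d\<in>D. d \<in> X" and "finite Y"
  shows "\<exists>q\<in>Pi\<^sub>E ({..<m} \<times> {..<m}) (\<lambda>_. D). \<forall>y\<in>Y. linear_test_loss m q y = linear_test_loss m p y"
proof -
  have "\<forall>k\<in>{..<m} \<times> {..<m}. \<exists>d\<in>D. \<forall>y\<in>Y. fst d + snd d \<bullet> y < 0 \<longleftrightarrow> fst (p k) + snd (p k) \<bullet> y < 0"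
    using halfspace_pattern_dense[OF D \<open>finite Y\<close>] by blast
  then obtain q where q: "q \<in> Pi\<^sub>E ({..<m} \<times> {..<m}) (\<lambda>_. D)"
    "\<forall>k\<in>{..<m} \<times> {..<m}. \<forall>y\<in>Y. fst (q k) + snd (q k) \<bullet> y < 0 \<longleftrightarrow> fst (p k) + snd (p k) \<bullet> y < 0"
    unfolding PiE_choice by blast
  have "linear_test_loss m q y = linear_test_loss m p y" if "y \<in> Y" for y
    unfolding linear_test_loss_def
    by (intro arg_cong[where f = "\<lambda>s. 1 / real m * s"] sum.cong refl) (use q(2) that in auto)
  with q(1) show ?thesis by blast
qed

text \<open>On a sample, the losses are determined by the traces of the \<open>m\<^sup>2\<close> half-spaces.\<close>

lemma sample_patterns_linear_test_loss_traces:
  fixes \<omega> :: "nat \<Rightarrow> 'a::real_inner"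
  assumes "finite (halfspace_traces \<omega> N)"
  shows "finite (sample_patterns (linear_test_loss m) N \<omega>)"
    and "card (sample_patterns (linear_test_loss m) N \<omega>) \<le> card (halfspace_traces \<omega> N) ^ (m * m)"
proof -
  define H where "H = halfspace_traces \<omega> N"
  define \<Phi> where "\<Phi> = (\<lambda>\<tau> :: nat \<times> nat \<Rightarrow> nat set. \<lambda>i\<in>{..<N}.
    1 / real m * (\<Sum>j<m. if \<exists>j'<m. j' \<noteq> j \<and> i \<in> \<tau> (j, j') then 1 else 0 :: real))"
  have fin: "finite (Pi\<^sub>E ({..<m} \<times> {..<m}) (\<lambda>_. H))"
    using assms by (intro finite_PiE) (auto simp: H_def)
  have sub: "sample_patterns (linear_test_loss m) N \<omega> \<subseteq> \<Phi> ` Pi\<^sub>E ({..<m} \<times> {..<m}) (\<lambda>_. H)"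
  proof
    fix v assume "v \<in> sample_patterns (linear_test_loss m) N \<omega>"
    then obtain p where v: "v = (\<lambda>i\<in>{..<N}. linear_test_loss m p (\<omega> i))"
      by (auto simp: sample_patterns_def)
    define \<tau> where "\<tau> = (\<lambda>k\<in>{..<m} \<times> {..<m}. {i. i < N \<and> fst (p k) + snd (p k) \<bullet> \<omega> i < 0})"
    have "\<tau> \<in> Pi\<^sub>E ({..<m} \<times> {..<m}) (\<lambda>_. H)"
      by (auto simp: \<tau>_def H_def halfspace_traces_def)
    moreover have "v = \<Phi> \<tau>"
      unfolding v \<Phi>_def linear_test_loss_def
      by (intro restrict_ext arg_cong[where f = "\<lambda>s. 1 / real m * s"] sum.cong refl) (auto simp: \<tau>_def)
    ultimately show "v \<in> \<Phi> ` Pi\<^sub>E ({..<m} \<times> {..<m}) (\<lambda>_. H)" by blast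
  qed
  then show "finite (sample_patterns (linear_test_loss m) N \<omega>)"
    using fin by (rule finite_subset[OF _ finite_imageI])
  have "card (sample_patterns (linear_test_loss m) N \<omega>) \<le> card (Pi\<^sub>E ({..<m} \<times> {..<m}) (\<lambda>_. H))"
    using sub fin by (meson card_image_le card_mono finite_imageI order_trans)
  then show "card (sample_patterns (linear_test_loss m) N \<omega>) \<le> card (halfspace_traces \<omega> N) ^ (m * m)"
    by (simp add: card_PiE H_def card_cartesian_product)
qed

lemma sample_patterns_linear_test_loss_le:
  fixes \<omega> :: "nat \<Rightarrow> 'a::euclidean_space"
  assumes "DIM('a) + 1 \<le> N"
  shows "finite (sample_patterns (linear_test_loss m) N \<omega>) \<and>
    real (card (sample_patterns (linear_test_loss m) N \<omega>))
      \<le> ((exp 1 * real N / real (DIM('a) + 1)) ^ (DIM('a) + 1)) ^ (m * m)"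
proof -
  note traces = card_halfspace_traces_le[OF assms, of \<omega>]
  have "real (card (sample_patterns (linear_test_loss m) N \<omega>)) \<le> real (card (halfspace_traces \<omega> N)) ^ (m * m)"
    using sample_patterns_linear_test_loss_traces(2)[OF traces(1)] by (simp flip: of_nat_power)
  also have "\<dots> \<le> ((exp 1 * real N / real (DIM('a) + 1)) ^ (DIM('a) + 1)) ^ (m * m)"
    using traces(2) by (intro power_mono) auto
  finally show ?thesis
    using sample_patterns_linear_test_loss_traces(1)[OF traces(1)] by simp
qed

lemma abs_Pe_mu_minus_Pe_emp:
  fixes x :: "nat \<Rightarrow> real^'d" and S :: "real^'d^'d"
  assumes "m \<ge> 2" "n \<ge> 1"
  defines "g \<equiv> linear_test_loss m (decoder_tests x S)"
  shows "\<bar>Pe_mu \<mu> m x S - Pe_emp n Z m x S\<bar> = \<bar>(\<Sum>i<n. g (Z i)) - real n * (\<integral>z. g z \<partial>\<mu>)\<bar> / real n"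
proof -
  have "loss m x S = g" using assms(1) by (simp add: fun_eq_iff g_def loss_eq_linear_test_loss)
  then have "Pe_mu \<mu> m x S - Pe_emp n Z m x S = - ((\<Sum>i<n. g (Z i)) - real n * (\<integral>z. g z \<partial>\<mu>)) / real n"
    using assms(2) by (simp add: Pe_mu_def Pe_emp_def field_simps)
  then show ?thesis by (simp add: abs_minus_commute)
qed

lemma Pe_uniform_deviation:
  fixes \<mu> :: "(real^'d) measure"
  assumes "prob_space \<mu>" "sets \<mu> = sets borel" "m \<ge> 2" "CARD('d) + 1 \<le> n" "t \<ge> 0"
  shows "\<exists>A\<in>sets (PiM {..<n} (\<lambda>_. \<mu>)).
    1 - 4 * ((exp 1 * real (2 * n) / real (CARD('d) + 1)) ^ (CARD('d) + 1)) ^ (m * m) * exp (- real n * t\<^sup>2 / 2)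
      \<le> measure (PiM {..<n} (\<lambda>_. \<mu>)) A \<and>
    (\<forall>Z\<in>A. \<forall>x S. \<bar>Pe_mu \<mu> m x S - Pe_emp n Z m x S\<bar> \<le> t + 1 / sqrt (real n))"
proof -
  define B where "B = ((exp 1 * real (2 * n) / real (CARD('d) + 1)) ^ (CARD('d) + 1)) ^ (m * m)"
  have "1 \<le> n" using assms(4) by simp
  have growth: "finite (sample_patterns (linear_test_loss m) (2 * n) \<omega>) \<and>
      real (card (sample_patterns (linear_test_loss m) (2 * n) \<omega>)) \<le> B" for \<omega> :: "nat \<Rightarrow> real^'d"
    using sample_patterns_linear_test_loss_le[where N = "2 * n" and \<omega> = \<omega> and m = m] assms(4)
    unfolding B_def by simp
  obtain D :: "(real \<times> (real^'d)) set" where "countable D" and D: "\<And>X. open X \<Longrightarrow> X \<noteq> {} \<Longrightarrow> \<exists>d\<in>D. d \<in> X"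
    by (rule countable_dense_setE) blast
  have "linear_test_loss m p \<in> borel_measurable \<mu>" for p :: "nat \<times> nat \<Rightarrow> real \<times> (real^'d)"
    by (simp add: measurable_cong_sets[OF assms(2) refl] borel_measurable_linear_test_loss)
  from uniform_deviation_le[OF assms(1) this linear_test_loss_bounds countable_PiE[OF _ \<open>countable D\<close>]
      linear_test_loss_dense[OF D] growth \<open>t \<ge> 0\<close> \<open>1 \<le> n\<close>]
  obtain A where "A \<in> sets (PiM {..<n} (\<lambda>_. \<mu>))"
    and "1 - 4 * B * exp (- real n * t\<^sup>2 / 2) \<le> measure (PiM {..<n} (\<lambda>_. \<mu>)) A"
    and good: "\<And>Z p. Z \<in> A \<Longrightarrow>
      \<bar>(\<Sum>i<n. linear_test_loss m p (Z i)) - real n * (\<integral>z. linear_test_loss m p z \<partial>\<mu>)\<bar> \<le> real n * t + sqrt (real n)"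
    by blast
  moreover have "\<bar>Pe_mu \<mu> m x S - Pe_emp n Z m x S\<bar> \<le> t + 1 / sqrt (real n)" if "Z \<in> A" for Z x S
  proof -
    have "\<bar>Pe_mu \<mu> m x S - Pe_emp n Z m x S\<bar> \<le> (real n * t + sqrt (real n)) / real n"
      unfolding abs_Pe_mu_minus_Pe_emp[OF assms(3) \<open>1 \<le> n\<close>] using good[OF that] by (rule divide_right_mono) simp
    also have "\<dots> = t + 1 / sqrt (real n)"
      using \<open>1 \<le> n\<close> sqrt_divide_self_eq[of "real n"] by (simp add: add_divide_distrib inverse_eq_divide)
    finally show ?thesis .
  qed
  ultimately show ?thesis unfolding B_def by blast
qed

lemma power2_add_minus_one_ge:
  fixes a b :: real
  assumes "16 \<le> a" "0 \<le> b"
  shows "a\<^sup>2 / 2 + b\<^sup>2 \<le> (a + b - 1)\<^sup>2"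
proof -
  have "0 \<le> (a - 2)\<^sup>2 / 2 - 1 + 2 * (a - 1) * b"
    using assms power_mono[of 14 "a - 2" 2] by simp
  moreover have "(a + b - 1)\<^sup>2 - (a\<^sup>2 / 2 + b\<^sup>2) = (a - 2)\<^sup>2 / 2 - 1 + 2 * (a - 1) * b"
    by (simp add: power2_eq_square field_simps)
  ultimately show ?thesis by linarith
qed

lemma growth_bound_le_exp:
  fixes K n :: nat
  assumes "1 \<le> K" "K \<le> n"
  shows "((exp 1 * real (2 * n) / real K) ^ K) ^ (m * m)
    \<le> exp (2 * (real m)\<^sup>2 * (real K * ln (exp 1 * real n / real K)))"
proof -
  define L where "L = ln (exp 1 * real n / real K)"
  have "0 < real n" "0 < real K" using assms by auto
  have "ln (exp 1 * real (2 * n) / real K) = ln 2 + L"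
    using \<open>0 < real n\<close> \<open>0 < real K\<close> ln_mult[of 2 "exp 1 * real n / real K"] by (simp add: L_def mult_ac)
  also have "\<dots> \<le> 2 * L"
  proof -
    have "1 \<le> real n / real K" using assms by simp
    then have "0 \<le> ln (real n / real K)" by (rule ln_ge_zero)
    moreover have "L = 1 + ln (real n / real K)"
      using \<open>0 < real K\<close> \<open>0 < real n\<close> ln_mult[of "exp 1" "real n / real K"] by (simp add: L_def)
    ultimately show ?thesis using ln_2_less_1 by linarith
  qed
  finally have ln_base: "ln (exp 1 * real (2 * n) / real K) \<le> 2 * L" .
  have "((exp 1 * real (2 * n) / real K) ^ K) ^ (m * m)
      = exp (real (K * (m * m)) * ln (exp 1 * real (2 * n) / real K))"
    using \<open>0 < real n\<close> \<open>0 < real K\<close> exp_ln[of "(exp 1 * real (2 * n) / real K) ^ (K * (m * m))"]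
    by (simp add: power_mult[symmetric] ln_realpow)
  also have "\<dots> \<le> exp (real (K * (m * m)) * (2 * L))"
    using ln_base by (intro exp_mono mult_left_mono) auto
  finally show ?thesis by (simp add: L_def power2_eq_square mult_ac)
qed

lemma confidence_arith:
  fixes K m n :: nat and \<delta> :: real
  assumes "2 \<le> K" "K \<le> n" "2 \<le> m" "0 < \<delta>" "\<delta> < 1"
  defines "\<epsilon> \<equiv> 4 * real m * sqrt (2 * real K * ln (exp 1 * real n / real K) / real n)
      + sqrt (2 * ln (2 / \<delta>) / real n)"
  defines "t \<equiv> \<epsilon> - 1 / sqrt (real n)"
  shows "0 \<le> t"
    and "4 * ((exp 1 * real (2 * n) / real K) ^ K) ^ (m * m) * exp (- real n * t\<^sup>2 / 2) \<le> \<delta>"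
proof -
  define L where "L = ln (exp 1 * real n / real K)"
  define a where "a = 4 * real m * sqrt (2 * real K * L)"
  define b where "b = sqrt (2 * ln (2 / \<delta>))"
  have n: "0 < real n" and K: "2 \<le> real K" and m: "2 \<le> real m"
    using assms(1-3) by auto
  have "1 \<le> L"
    using n K assms(2) ln_mult[of "exp 1" "real n / real K"] by (simp add: L_def)
  then have KL: "2 \<le> real K * L" using K by (metis mult_mono' mult.right_neutral order_trans zero_le_one zero_le_numeral)
  have "16 \<le> a"
  proof -
    have "sqrt 4 \<le> sqrt (2 * real K * L)"
      using KL by (intro real_sqrt_le_mono) (simp add: mult_ac)
    then have "8 * 2 \<le> (4 * real m) * sqrt (2 * real K * L)"
      using m by (intro mult_mono) auto
    then show ?thesis by (simp add: a_def)
  qed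
  have "0 < ln (2 / \<delta>)" using assms(4,5) by simp
  then have b: "0 \<le> b" "b\<^sup>2 = 2 * ln (2 / \<delta>)" by (simp_all add: b_def)
  have t: "t = (a + b - 1) / sqrt (real n)"
    by (simp add: t_def \<epsilon>_def a_def b_def L_def real_sqrt_divide real_sqrt_mult add_divide_distrib diff_divide_distrib)
  show "0 \<le> t"
    unfolding t using \<open>16 \<le> a\<close> b(1) by simp
  have "a\<^sup>2 = 32 * (real m)\<^sup>2 * (real K * L)"
    using KL by (simp add: a_def power_mult_distrib mult_ac)
  then have exponent: "16 * (real m)\<^sup>2 * (real K * L) + 2 * ln (2 / \<delta>) \<le> real n * t\<^sup>2"
    unfolding t using n b(2) power2_add_minus_one_ge[OF \<open>16 \<le> a\<close> b(1)] by (simp add: power_divide mult_ac)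
  have "4 * ((exp 1 * real (2 * n) / real K) ^ K) ^ (m * m) * exp (- real n * t\<^sup>2 / 2)
      \<le> 4 * exp (2 * (real m)\<^sup>2 * (real K * L)) * exp (- (8 * (real m)\<^sup>2 * (real K * L) + ln (2 / \<delta>)))"
    using growth_bound_le_exp[of K n m] exponent assms(1,2) unfolding L_def by (intro mult_mono) auto
  also have "\<dots> = 2 * exp (- (6 * (real m)\<^sup>2 * (real K * L))) * \<delta>"
    using assms(4) by (simp add: exp_minus exp_add[symmetric] field_simps)
  also have "\<dots> \<le> \<delta>"
  proof -
    have "1 \<le> 6 * (real m)\<^sup>2 * (real K * L)"
      using KL m by (smt (verit) mult_le_cancel_left1 one_le_power power2_eq_square)
    then have "2 \<le> exp (6 * (real m)\<^sup>2 * (real K * L))"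
      using exp_ge_add_one_self[of "6 * (real m)\<^sup>2 * (real K * L)"] by linarith
    then show ?thesis using assms(4) by (simp add: exp_minus field_simps)
  qed
  finally show "4 * ((exp 1 * real (2 * n) / real K) ^ K) ^ (m * m) * exp (- real n * t\<^sup>2 / 2) \<le> \<delta>" .
qed

theorem theorem1:
  fixes \<mu> :: "(real^'d) measure" and m n :: nat and \<delta> :: real
  assumes "prob_space \<mu>" and "sets \<mu> = sets borel"
    and "m \<ge> 2" and "n \<ge> CARD('d) + 1"
    and "0 < \<delta>" and "\<delta> < 1"
  shows "\<exists>A \<in> sets (PiM {..<n} (\<lambda>_. \<mu>)).
           measure (PiM {..<n} (\<lambda>_. \<mu>)) A \<ge> 1 - \<delta> \<and>
           (\<forall>Z\<in>A. \<forall>x :: nat \<Rightarrow> real^'d. \<forall>S :: real^'d^'d. pos_def S \<longrightarrow>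
              \<bar>Pe_mu \<mu> m x S - Pe_emp n Z m x S\<bar>
                \<le> 4 * real m * sqrt (2 * (real CARD('d) + 1) * ln (exp 1 * real n / (real CARD('d) + 1)) / real n)
                  + sqrt (2 * ln (2 / \<delta>) / real n))"
proof -
  define K where "K = CARD('d) + 1"
  define \<epsilon> where "\<epsilon> = 4 * real m * sqrt (2 * real K * ln (exp 1 * real n / real K) / real n)
      + sqrt (2 * ln (2 / \<delta>) / real n)"
  define t where "t = \<epsilon> - 1 / sqrt (real n)"
  have "2 \<le> K" "K \<le> n" using assms(4) by (auto simp: K_def)
  note t = confidence_arith[OF this assms(3,5,6), folded \<epsilon>_def t_def, unfolded K_def]
  from Pe_uniform_deviation[OF assms(1-4) t(1)] obtain A where A: "A \<in> sets (PiM {..<n} (\<lambda>_. \<mu>))"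
    "1 - 4 * ((exp 1 * real (2 * n) / real (CARD('d) + 1)) ^ (CARD('d) + 1)) ^ (m * m) * exp (- real n * t\<^sup>2 / 2)
      \<le> measure (PiM {..<n} (\<lambda>_. \<mu>)) A"
    "\<forall>Z\<in>A. \<forall>x S. \<bar>Pe_mu \<mu> m x S - Pe_emp n Z m x S\<bar> \<le> \<epsilon>"
    unfolding t_def by auto
  have "real K = real CARD('d) + 1" by (simp add: K_def)
  with A t(2) show ?thesis
    unfolding \<epsilon>_def by (intro bexI[of _ A]) auto
qed

end
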